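(* Let $\mathbb{X}$ be a two-dimensional real Banach space, $x_1,x_2\in S_{\mathbb{X}}$ and $\epsilon_1,\epsilon_2\in(0,1)$. If $F(x_1,\epsilon_1)=F(x_2,\epsilon_2)$, then $x_1=\pm x_2$ and $\epsilon_1=\epsilon_2$.
   Context: $S_{\mathbb{X}}$ is the unit sphere. For $x,y\in\mathbb{X}$ and $\epsilon\in[0,1)$, $x\perp_D^{\epsilon} y$ means $\|x+\lambda y\|\geq\sqrt{1-\epsilon^2}\,\|x\|$ for all $\lambda\in\mathbb{R}$; $F(x,\epsilon)=\{y\in\mathbb{X}: x\perp_D^{\epsilon}y\}$. *)

theory Defs
  imports "HOL-Analysis.Analysis"
begin

definition approx_bj_orth :: "'a::real_normed_vector \<Rightarrow> real \<Rightarrow> 'a \<Rightarrow> bool" where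
  "approx_bj_orth x \<epsilon> y \<longleftrightarrow> (\<forall>t::real. norm (x + t *\<^sub>R y) \<ge> sqrt (1 - \<epsilon>^2) * norm x)"

definition F_set :: "'a::real_normed_vector \<Rightarrow> real \<Rightarrow> 'a set" where
  "F_set x \<epsilon> = {y. approx_bj_orth x \<epsilon> y}"

end

theory Submission
  imports Defs
begin

text \<open>Rescaling by \<open>sqrt (1 - \<epsilon>\<^sup>2)\<close> turns \<open>F(x, \<epsilon>)\<close> into the set of directions of the lines
  through a point \<open>u\<close> with \<open>norm u > 1\<close> that miss the open unit ball. Moving a direction from
  \<open>u\<close> towards one whose line stays strictly outside the closed ball, the set is first entered at a
  direction \<open>y\<close> whose line through \<open>u\<close> touches the ball. If two points \<open>u\<^sub>1, u\<^sub>2\<close> have the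
  same set, both lines in direction \<open>y\<close> touch the ball, and since the ball is symmetric this
  forces \<open>u\<^sub>2 = \<plusminus>u\<^sub>1 + \<beta> y\<close>. Doing this on both sides of \<open>u\<^sub>1\<close> in the plane gives two independent
  such directions; equal signs leave only \<open>u\<^sub>2 = \<plusminus>u\<^sub>1\<close>, while opposite signs would put \<open>u\<^sub>1\<close>
  into its own set. Comparing norms then gives \<open>\<epsilon>\<^sub>1 = \<epsilon>\<^sub>2\<close>.\<close>

definition independent_pair :: "'a::real_vector \<Rightarrow> 'a \<Rightarrow> bool" where
  "independent_pair a b \<longleftrightarrow> (\<forall>c d. c *\<^sub>R a + d *\<^sub>R b = 0 \<longrightarrow> c = 0 \<and> d = 0)"

lemma exists_independent_pair:
  fixes u :: "'a::real_vector"
  assumes "2 \<le> dim (UNIV :: 'a set)" "u \<noteq> 0"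
  shows "\<exists>v. independent_pair u v"
proof -
  have "span {u} \<noteq> UNIV"
  proof
    assume "span {u} = UNIV"
    then have "dim (UNIV :: 'a set) \<le> card {u}" by (intro dim_le_card) auto
    then show False using assms(1) by simp
  qed
  then obtain v where v: "v \<notin> span {u}" by blast
  have "c = 0 \<and> d = 0" if h: "c *\<^sub>R u + d *\<^sub>R v = 0" for c d
  proof (cases "d = 0")
    case True
    then show ?thesis using h assms(2) by simp
  next
    case False
    have "(1 / d) *\<^sub>R (c *\<^sub>R u + d *\<^sub>R v) = 0" using h by simp
    then have "v = (- c / d) *\<^sub>R u"
      using False by (simp add: scaleR_add_right eq_neg_iff_add_eq_0 add.commute)
    then show ?thesis using v by (metis span_base span_scale singletonI)
  qed
  then show ?thesis unfolding independent_pair_def by blast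
qed

lemma independent_pair_spans:
  fixes a b :: "'a::real_vector"
  assumes "dim (UNIV :: 'a set) = 2" "independent_pair a b"
  shows "\<exists>c d. z = c *\<^sub>R a + d *\<^sub>R b"
proof -
  have coeffs: "c *\<^sub>R a + d *\<^sub>R b = 0 \<Longrightarrow> c = 0 \<and> d = 0" for c d
    using assms(2) unfolding independent_pair_def by blast
  have "a \<noteq> b" "b \<noteq> 0" using coeffs[of 1 "-1"] coeffs[of 0 1] by auto
  have "a \<notin> span {b}"
  proof
    assume "a \<in> span {b}"
    then obtain k where "a = k *\<^sub>R b" by (auto simp: span_singleton)
    then show False using coeffs[of 1 "-k"] by simp
  qed
  then have "independent {a, b}" using \<open>b \<noteq> 0\<close> by (simp add: independent_insert)
  obtain B :: "'a set" where B: "UNIV \<subseteq> span B" "card B = 2"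
    using basis_exists[of "UNIV :: 'a set"] assms(1) by auto
  then have "finite B" by (simp add: card_ge_0_finite)
  have "z \<in> span {a, b}"
  proof (rule ccontr)
    assume "z \<notin> span {a, b}"
    then have "independent {z, a, b}" "z \<notin> {a, b}"
      using \<open>independent {a, b}\<close> independent_insertI by (auto intro: span_base)
    then have "card {z, a, b} \<le> card B"
      using independent_span_bound[OF \<open>finite B\<close>, of "{z, a, b}"] B(1) by auto
    then show False using \<open>z \<notin> {a, b}\<close> \<open>a \<noteq> b\<close> B(2) by auto
  qed
  then obtain k where "z - k *\<^sub>R a \<in> span {b}" by (auto simp: span_breakdown_eq)
  then obtain m where "z - k *\<^sub>R a = m *\<^sub>R b" by (auto simp: span_singleton)
  then show ?thesis by (metis diff_eq_eq add.commute)
qed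

lemma independent_pair_segment_points:
  assumes "independent_pair a b" "0 < s" "s < 1" "0 < s'" "s' < 1"
  shows "independent_pair ((1 - s) *\<^sub>R a + s *\<^sub>R b) ((1 - s') *\<^sub>R a + s' *\<^sub>R (- b))"
  unfolding independent_pair_def
proof (intro allI impI)
  fix c d
  assume "c *\<^sub>R ((1 - s) *\<^sub>R a + s *\<^sub>R b) + d *\<^sub>R ((1 - s') *\<^sub>R a + s' *\<^sub>R (- b)) = 0"
  then have "(c * (1 - s) + d * (1 - s')) *\<^sub>R a + (c * s - d * s') *\<^sub>R b = 0"
    by (simp add: algebra_simps)
  then have E: "c * (1 - s) + d * (1 - s') = 0" "c * s - d * s' = 0"
    using assms(1) unfolding independent_pair_def by blast+
  have "d * (s * (1 - s') + s' * (1 - s)) = s * (c * (1 - s) + d * (1 - s')) - (1 - s) * (c * s - d * s')"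
    by (simp add: algebra_simps)
  also have "\<dots> = 0" using E by simp
  moreover have "0 < s * (1 - s') + s' * (1 - s)" using assms(2-5) by (intro add_pos_pos) auto
  ultimately have "d = 0" by simp
  then show "c = 0 \<and> d = 0" using E(2) assms(2) by simp
qed

definition avoiding_dirs :: "'a::real_normed_vector \<Rightarrow> 'a set" where
  "avoiding_dirs u = {y. \<forall>t. 1 \<le> norm (u + t *\<^sub>R y)}"

lemma self_notin_avoiding_dirs: "u \<notin> avoiding_dirs u"
  unfolding avoiding_dirs_def by (auto intro!: exI[of _ "-1"])

lemma abs_le_norm_of_avoiding_dir:
  assumes "y \<in> avoiding_dirs u" "c \<noteq> 0"
  shows "\<bar>c\<bar> \<le> norm (c *\<^sub>R u + w *\<^sub>R y)"
proof -
  have "c *\<^sub>R u + w *\<^sub>R y = c *\<^sub>R (u + (w / c) *\<^sub>R y)"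
    using assms(2) by (simp add: scaleR_add_right)
  moreover have "1 \<le> norm (u + (w / c) *\<^sub>R y)"
    using assms(1) unfolding avoiding_dirs_def by blast
  ultimately show ?thesis by (simp add: mult_le_cancel_left1)
qed

lemma independent_pair_of_avoiding_dir:
  assumes "y \<in> avoiding_dirs u" "y \<noteq> 0"
  shows "independent_pair u y"
  unfolding independent_pair_def
proof (intro allI impI)
  fix c d
  assume h: "c *\<^sub>R u + d *\<^sub>R y = 0"
  then have "c = 0" using abs_le_norm_of_avoiding_dir[OF assms(1), of c d] by force
  then show "c = 0 \<and> d = 0" using h assms(2) by simp
qed

lemma closed_avoiding_dirs: "closed (avoiding_dirs u)"
  unfolding avoiding_dirs_def by (intro closed_Collect_all closed_Collect_le continuous_intros)

lemma strictly_avoiding_dir_in_interior: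
  assumes "y \<noteq> 0" "\<forall>t. 1 < norm (u + t *\<^sub>R y)"
  shows "y \<in> interior (avoiding_dirs u)"
proof -
  define n where "n = norm y"
  define R where "R = 2 * (norm u + 2) / n"
  have n: "n > 0" using assms(1) unfolding n_def by simp
  then have R: "R > 0" unfolding R_def by (simp add: add_nonneg_pos)
  have "continuous_on {-R..R} (\<lambda>t. norm (u + t *\<^sub>R y))" by (intro continuous_intros)
  then obtain t0 where t0: "\<forall>t\<in>{-R..R}. norm (u + t0 *\<^sub>R y) \<le> norm (u + t *\<^sub>R y)"
    using continuous_attains_inf[of "{-R..R}"] R by fastforce
  define m where "m = norm (u + t0 *\<^sub>R y)"
  have m: "m > 1" unfolding m_def using assms(2) by blast
  define e where "e = min (n / 2) ((m - 1) / (R + 1))"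
  have e: "e > 0" unfolding e_def using n m R by simp
  have "e \<le> (m - 1) / (R + 1)" unfolding e_def by simp
  then have Re: "(R + 1) * e \<le> m - 1" using R by (simp add: le_divide_eq mult.commute)
  have "y' \<in> avoiding_dirs u" if y': "norm (y' - y) < e" for y'
  proof -
    have "1 \<le> norm (u + t *\<^sub>R y')" for t
    proof (cases "\<bar>t\<bar> \<le> R")
      case True
      have "u + t *\<^sub>R y = (u + t *\<^sub>R y') - t *\<^sub>R (y' - y)" by (simp add: algebra_simps)
      then have "norm (u + t *\<^sub>R y) \<le> norm (u + t *\<^sub>R y') + \<bar>t\<bar> * norm (y' - y)"
        by (metis norm_scaleR norm_triangle_ineq4 real_norm_def)
      moreover have "m \<le> norm (u + t *\<^sub>R y)" unfolding m_def using t0 True by (simp add: abs_le_iff)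
      moreover have "\<bar>t\<bar> * norm (y' - y) \<le> R * e" using True y' e by (intro mult_mono) auto
      ultimately show ?thesis using e Re by (simp add: algebra_simps)
    next
      case False
      have "norm y' \<ge> n / 2"
        using norm_triangle_ineq2[of y y'] y' unfolding e_def n_def by (simp add: norm_minus_commute)
      then have "\<bar>t\<bar> * norm y' \<ge> R * (n / 2)" using False n R by (intro mult_mono) auto
      moreover have "R * (n / 2) = norm u + 2" unfolding R_def using n by simp
      moreover have "norm (t *\<^sub>R y') \<le> norm (u + t *\<^sub>R y') + norm u"
        by (metis add.commute add_diff_cancel_left' norm_triangle_ineq4)
      ultimately show ?thesis by simp
    qed
    then show ?thesis unfolding avoiding_dirs_def by blast
  qed
  then have "ball y e \<subseteq> avoiding_dirs u" by (auto simp: dist_norm norm_minus_commute)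
  then show ?thesis using e by (intro interiorI[of "ball y e"]) auto
qed

lemma frontier_avoiding_dir_touches_ball:
  assumes "y \<in> frontier (avoiding_dirs u)" "y \<noteq> 0"
  shows "\<exists>t. norm (u + t *\<^sub>R y) \<le> 1"
  using strictly_avoiding_dir_in_interior[OF assms(2)] assms(1) by (force simp: frontier_def not_le)

lemma abs_coeff_eq_one_of_touching_lines:
  assumes "y \<in> avoiding_dirs u1" "y \<in> avoiding_dirs u2"
    and "norm (u1 + t1 *\<^sub>R y) \<le> 1" "norm (u2 + t2 *\<^sub>R y) \<le> 1"
    and "u2 = \<alpha> *\<^sub>R u1 + \<beta> *\<^sub>R y"
  shows "\<bar>\<alpha>\<bar> = 1"
proof -
  have "\<alpha> \<noteq> 0"
  proof
    assume "\<alpha> = 0"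
    then have "u2 + (- \<beta>) *\<^sub>R y = 0" using assms(5) by simp
    moreover have "1 \<le> norm (u2 + (- \<beta>) *\<^sub>R y)" using assms(2) unfolding avoiding_dirs_def by blast
    ultimately show False by simp
  qed
  have "\<bar>\<alpha>\<bar> \<le> norm (\<alpha> *\<^sub>R u1 + (\<beta> + t2) *\<^sub>R y)"
    by (rule abs_le_norm_of_avoiding_dir[OF assms(1) \<open>\<alpha> \<noteq> 0\<close>])
  also have "\<alpha> *\<^sub>R u1 + (\<beta> + t2) *\<^sub>R y = u2 + t2 *\<^sub>R y"
    using assms(5) by (simp add: algebra_simps)
  finally have "\<bar>\<alpha>\<bar> \<le> 1" using assms(4) by simp
  have "\<bar>inverse \<alpha>\<bar> \<le> norm (inverse \<alpha> *\<^sub>R u2 + (t1 - \<beta> / \<alpha>) *\<^sub>R y)"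
    using \<open>\<alpha> \<noteq> 0\<close> by (intro abs_le_norm_of_avoiding_dir[OF assms(2)]) simp
  also have "inverse \<alpha> *\<^sub>R u2 + (t1 - \<beta> / \<alpha>) *\<^sub>R y = u1 + t1 *\<^sub>R y"
    using assms(5) \<open>\<alpha> \<noteq> 0\<close> by (simp add: algebra_simps divide_inverse)
  finally have "\<bar>inverse \<alpha>\<bar> \<le> 1" using assms(3) by simp
  moreover have "\<bar>\<alpha>\<bar> < 1 \<Longrightarrow> 1 < \<bar>inverse \<alpha>\<bar>"
    using \<open>\<alpha> \<noteq> 0\<close> by (simp add: one_less_inverse abs_inverse)
  ultimately have "1 \<le> \<bar>\<alpha>\<bar>" by linarith
  then show ?thesis using \<open>\<bar>\<alpha>\<bar> \<le> 1\<close> by simp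
qed

lemma self_in_avoiding_dirs_of_opposite_decompositions:
  assumes "y \<in> avoiding_dirs u1" "y' \<in> avoiding_dirs u1"
    and "u2 = u1 + a *\<^sub>R y" "u2 = - u1 + b *\<^sub>R y'"
  shows "u1 \<in> avoiding_dirs u2"
  unfolding avoiding_dirs_def
proof (intro CollectI allI)
  fix t
  show "1 \<le> norm (u2 + t *\<^sub>R u1)"
  proof (cases "t \<ge> 0")
    case True
    have "u2 + t *\<^sub>R u1 = (1 + t) *\<^sub>R u1 + a *\<^sub>R y" using assms(3) by (simp add: algebra_simps)
    moreover have "\<bar>1 + t\<bar> \<le> norm ((1 + t) *\<^sub>R u1 + a *\<^sub>R y)"
      using True by (intro abs_le_norm_of_avoiding_dir[OF assms(1)]) auto
    ultimately show ?thesis using True by simp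
  next
    case False
    have "u2 + t *\<^sub>R u1 = (t - 1) *\<^sub>R u1 + b *\<^sub>R y'" using assms(4) by (simp add: algebra_simps)
    moreover have "\<bar>t - 1\<bar> \<le> norm ((t - 1) *\<^sub>R u1 + b *\<^sub>R y')"
      using False by (intro abs_le_norm_of_avoiding_dir[OF assms(2)]) auto
    ultimately show ?thesis using False by simp
  qed
qed

lemma exists_strictly_avoiding_dir:
  fixes u :: "'a::real_normed_vector"
  assumes "1 < norm u" "independent_pair u v"
  shows "\<exists>y. y \<noteq> 0 \<and> (\<forall>t. 1 < norm (u + t *\<^sub>R y))"
proof -
  txt \<open>Separate \<open>(1, 0)\<close> from the unit ball pulled back to coordinates of \<open>span {u, v}\<close>; the
    separating line has the required direction.\<close>
  define T where "T p = fst p *\<^sub>R u + snd p *\<^sub>R v" for p :: "real \<times> real"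
  have T_linear: "T (a *\<^sub>R p + b *\<^sub>R q) = a *\<^sub>R T p + b *\<^sub>R T q" for a b p q
    unfolding T_def by (simp add: algebra_simps)
  define S where "S = {p. norm (T p) \<le> 1}"
  have "convex S"
    unfolding convex_def S_def
  proof (intro allI impI ballI, clarify)
    fix p q :: "real \<times> real" and a b :: real
    assume h: "norm (T p) \<le> 1" "norm (T q) \<le> 1" "0 \<le> a" "0 \<le> b" "a + b = 1"
    have "norm (T (a *\<^sub>R p + b *\<^sub>R q)) \<le> a * norm (T p) + b * norm (T q)"
      unfolding T_linear using h by (metis abs_of_nonneg norm_scaleR norm_triangle_ineq)
    also have "\<dots> \<le> a * 1 + b * 1" using h by (intro add_mono mult_left_mono) auto
    finally show "norm (T (a *\<^sub>R p + b *\<^sub>R q)) \<le> 1" using h by simp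
  qed
  moreover have "closed S" unfolding S_def T_def by (intro closed_Collect_le continuous_intros)
  moreover have "(1, 0) \<notin> S" unfolding S_def T_def using assms(1) by simp
  ultimately obtain a c where ac: "inner a (1, 0) < c" "\<forall>p\<in>S. c < inner a p"
    using separating_hyperplane_closed_point by blast
  have "(0, 0) \<in> S" unfolding S_def T_def by simp
  then have "a \<noteq> 0" using ac by auto
  define y where "y = T (- snd a, fst a)"
  have "y \<noteq> 0"
  proof
    assume "y = 0"
    then have "snd a = 0" "fst a = 0"
      using assms(2) unfolding y_def T_def independent_pair_def by fastforce+
    then show False using \<open>a \<noteq> 0\<close> by (simp add: prod_eq_iff)
  qed
  moreover have "1 < norm (u + t *\<^sub>R y)" for t
  proof -
    define q where "q = (1 - t * snd a, t * fst a)"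
    have "inner a q = inner a (1, 0)"
      unfolding q_def by (cases a) (simp add: inner_prod_def algebra_simps)
    then have "q \<notin> S" using ac by auto
    moreover have "T q = u + t *\<^sub>R y" unfolding q_def y_def T_def by (simp add: algebra_simps)
    ultimately show ?thesis unfolding S_def by auto
  qed
  ultimately show ?thesis by blast
qed

lemma tangent_decomposition:
  fixes u1 u2 :: "'a::real_normed_vector"
  assumes "dim (UNIV :: 'a set) = 2" "avoiding_dirs u1 = avoiding_dirs u2"
    and "b \<noteq> 0" "\<forall>t. 1 < norm (u1 + t *\<^sub>R b)"
  shows "\<exists>s y \<alpha> \<beta>. 0 < s \<and> s < 1 \<and> y = (1 - s) *\<^sub>R u1 + s *\<^sub>R b \<and>
    y \<in> avoiding_dirs u1 \<and> u2 = \<alpha> *\<^sub>R u1 + \<beta> *\<^sub>R y \<and> \<bar>\<alpha>\<bar> = 1"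
proof -
  have b_avoiding: "b \<in> avoiding_dirs u1"
    using assms(4) unfolding avoiding_dirs_def by (auto intro: less_imp_le)
  obtain y where "y \<in> closed_segment u1 b" and y_frontier: "y \<in> frontier (avoiding_dirs u1)"
    using connected_Int_frontier[of "closed_segment u1 b" "avoiding_dirs u1"]
      self_notin_avoiding_dirs b_avoiding by blast
  then obtain s where s: "0 \<le> s" "s \<le> 1" and y: "y = (1 - s) *\<^sub>R u1 + s *\<^sub>R b"
    by (auto simp: closed_segment_def)
  have y_avoiding: "y \<in> avoiding_dirs u1"
    using y_frontier frontier_subset_closed[OF closed_avoiding_dirs] by blast
  have "y \<noteq> 0"
    using independent_pair_of_avoiding_dir[OF b_avoiding assms(3)] unfolding y independent_pair_def
    by force
  obtain t1 where t1: "norm (u1 + t1 *\<^sub>R y) \<le> 1"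
    using frontier_avoiding_dir_touches_ball[OF y_frontier \<open>y \<noteq> 0\<close>] by blast
  obtain t2 where t2: "norm (u2 + t2 *\<^sub>R y) \<le> 1"
    using frontier_avoiding_dir_touches_ball[of y u2] y_frontier \<open>y \<noteq> 0\<close> assms(2) by auto
  have "s \<noteq> 0" using y_avoiding self_notin_avoiding_dirs y by force
  moreover have "s \<noteq> 1"
  proof
    assume "s = 1"
    then show False using t1 assms(4) y by (metis add_0 not_le scale_one scale_zero_left diff_self)
  qed
  moreover obtain \<alpha> \<beta> where decomp: "u2 = \<alpha> *\<^sub>R u1 + \<beta> *\<^sub>R y"
    using independent_pair_spans[OF assms(1) independent_pair_of_avoiding_dir[OF y_avoiding \<open>y \<noteq> 0\<close>]]
    by blast
  moreover have "\<bar>\<alpha>\<bar> = 1"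
    using abs_coeff_eq_one_of_touching_lines[OF y_avoiding _ t1 t2 decomp] y_avoiding assms(2) by simp
  ultimately show ?thesis using s y y_avoiding
    by (intro exI[of _ s] exI[of _ y] exI[of _ \<alpha>] exI[of _ \<beta>]) auto
qed

lemma avoiding_dirs_eq_imp_eq_or_neg:
  fixes u1 u2 :: "'a::real_normed_vector"
  assumes dim: "dim (UNIV :: 'a set) = 2" and "1 < norm u1"
    and eq: "avoiding_dirs u1 = avoiding_dirs u2"
  shows "u2 = u1 \<or> u2 = - u1"
proof -
  obtain v where "independent_pair u1 v"
    using exists_independent_pair[of u1] dim \<open>1 < norm u1\<close> by force
  then obtain b where b: "b \<noteq> 0" "\<forall>t. 1 < norm (u1 + t *\<^sub>R b)"
    using exists_strictly_avoiding_dir \<open>1 < norm u1\<close> by blast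
  moreover have "\<forall>t. 1 < norm (u1 + t *\<^sub>R - b)"
    using b(2) by (metis scaleR_minus_left scaleR_minus_right)
  ultimately obtain s y \<alpha> \<beta> s' y' \<alpha>' \<beta>' where
    s: "0 < s" "s < 1" "y = (1 - s) *\<^sub>R u1 + s *\<^sub>R b" "y \<in> avoiding_dirs u1"
      "u2 = \<alpha> *\<^sub>R u1 + \<beta> *\<^sub>R y" "\<bar>\<alpha>\<bar> = 1" and
    s': "0 < s'" "s' < 1" "y' = (1 - s') *\<^sub>R u1 + s' *\<^sub>R - b" "y' \<in> avoiding_dirs u1"
      "u2 = \<alpha>' *\<^sub>R u1 + \<beta>' *\<^sub>R y'" "\<bar>\<alpha>'\<bar> = 1"
    using tangent_decomposition[OF dim eq, of b] tangent_decomposition[OF dim eq, of "- b"]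
    by (metis neg_equal_0_iff_equal)
  have "b \<in> avoiding_dirs u1" using b(2) unfolding avoiding_dirs_def by (auto intro: less_imp_le)
  then have "independent_pair y y'"
    using independent_pair_segment_points independent_pair_of_avoiding_dir b(1) s s' by metis
  show ?thesis
  proof (cases "\<alpha> = \<alpha>'")
    case True
    then have "\<beta> *\<^sub>R y + (- \<beta>') *\<^sub>R y' = 0" using s(5) s'(5) by (simp add: algebra_simps)
    then have "\<beta> = 0" using \<open>independent_pair y y'\<close> unfolding independent_pair_def by blast
    then show ?thesis using s(5,6) by (auto simp: abs_if split: if_splits)
  next
    case False
    then consider "\<alpha> = 1" "\<alpha>' = -1" | "\<alpha> = -1" "\<alpha>' = 1"
      using s(6) s'(6) by (auto simp: abs_if split: if_splits)
    then have "u1 \<in> avoiding_dirs u2"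
    proof cases
      case 1
      then show ?thesis
        using self_in_avoiding_dirs_of_opposite_decompositions[OF s(4) s'(4), of u2 \<beta> \<beta>'] s(5) s'(5)
        by simp
    next
      case 2
      then show ?thesis
        using self_in_avoiding_dirs_of_opposite_decompositions[OF s'(4) s(4), of u2 \<beta>' \<beta>] s(5) s'(5)
        by simp
    qed
    then show ?thesis using self_notin_avoiding_dirs eq by blast
  qed
qed

lemma F_set_eq_avoiding_dirs:
  assumes "0 < d" "d = sqrt (1 - e^2) * norm x"
  shows "F_set x e = avoiding_dirs (inverse d *\<^sub>R x)"
proof -
  have rescale: "norm (inverse d *\<^sub>R x + t *\<^sub>R y) = norm (x + (d * t) *\<^sub>R y) / d" for t y
  proof -
    have "inverse d *\<^sub>R x + t *\<^sub>R y = inverse d *\<^sub>R (x + (d * t) *\<^sub>R y)"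
      using assms(1) by (simp add: scaleR_add_right)
    then show ?thesis using assms(1) by (simp add: divide_inverse_commute)
  qed
  have "(\<forall>t. d \<le> norm (x + t *\<^sub>R y)) \<longleftrightarrow> (\<forall>t. 1 \<le> norm (inverse d *\<^sub>R x + t *\<^sub>R y))" for y
    unfolding rescale using assms(1)
    by (metis (no_types) le_divide_eq_1_pos nonzero_mult_div_cancel_left order_less_irrefl times_divide_eq_right)
  then show ?thesis
    unfolding F_set_def avoiding_dirs_def approx_bj_orth_def assms(2)[symmetric] by blast
qed

theorem theorem2p5:
  fixes x1 x2 :: "'a::banach" and e1 e2 :: real
  assumes "dim (UNIV :: 'a set) = 2"
    and "norm x1 = 1" and "norm x2 = 1"
    and "0 < e1" and "e1 < 1" and "0 < e2" and "e2 < 1"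
    and "F_set x1 e1 = F_set x2 e2"
  shows "(x1 = x2 \<or> x1 = - x2) \<and> e1 = e2"
proof -
  define d1 d2 where "d1 = sqrt (1 - e1^2)" and "d2 = sqrt (1 - e2^2)"
  have d1: "0 < d1" "d1 < 1" and d2: "0 < d2" "d2 < 1"
    using assms(4-7) unfolding d1_def d2_def by (auto simp: power_less_one_iff)
  define u1 u2 where "u1 = inverse d1 *\<^sub>R x1" and "u2 = inverse d2 *\<^sub>R x2"
  have "avoiding_dirs u1 = avoiding_dirs u2"
    using F_set_eq_avoiding_dirs[of d1 e1 x1] F_set_eq_avoiding_dirs[of d2 e2 x2]
      assms(2,3,8) d1 d2 unfolding u1_def u2_def d1_def d2_def by simp
  moreover have "norm u1 = inverse d1" "norm u2 = inverse d2"
    using assms(2,3) d1 d2 unfolding u1_def u2_def by auto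
  ultimately have u: "u2 = u1 \<or> u2 = - u1"
    using avoiding_dirs_eq_imp_eq_or_neg[OF assms(1)] d1 by (simp add: one_less_inverse)
  then have "d1 = d2" using \<open>norm u1 = inverse d1\<close> \<open>norm u2 = inverse d2\<close> by auto
  then have "e1 = e2"
    using assms(4-7) unfolding d1_def d2_def by (simp add: power2_eq_iff_nonneg)
  moreover have "x1 = d1 *\<^sub>R u1" "x2 = d1 *\<^sub>R u2"
    using \<open>d1 = d2\<close> d1 unfolding u1_def u2_def by auto
  ultimately show ?thesis using u by auto
qed

end
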